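(* Let $q=2^m$ with $m$ a positive integer, let $b\in\mathbb{F}_q^*$ and $\delta\in\mathbb{F}_{q^2}\setminus\mathbb{F}_q$. Put $$A=b\,\mathrm{Tr}_{q^2/q}(\delta)^2,\quad B=b\delta^{6q}+b\delta^6,\quad C=\mathrm{Tr}_{q^2/q}(\delta)^2,\quad D=A^{-1},$$ and define $S_{-1}=0$, $S_0=1$, $S_i=C^{2^{i-1}}S_{i-1}+D^{2^{i-1}}S_{i-2}$ for $i\geq1$. If the polynomial $$P(x)=b(x^q+x+\delta)^{6}+x$$ permutes $\mathbb{F}_{q^2}$, then its compositional inverse over $\mathbb{F}_{q^2}$ is $$P^{-1}(x)=x+b\left(\delta+\sum_{i=0}^{m-1}\left(D^{2^i}S_{m-2-i}^{2^{i+1}}+D^{1-2^{i}}S_i\right)\left(x^q+x+B\right)^{2^i}\right)^{6}.$$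
   Context: $\mathrm{Tr}_{q^2/q}(y)=y+y^q$. The compositional inverse of a permutation polynomial $f$ of $\mathbb{F}_{Q}$ is the unique polynomial $f^{-1}$ (modulo $x^Q-x$) with $f(f^{-1}(c))=f^{-1}(f(c))=c$ for all $c\in\mathbb{F}_Q$. *)

theory Defs
  imports Main
begin

definition tr :: "nat \<Rightarrow> 'a::field \<Rightarrow> 'a" where
  "tr q y = y + y ^ q"

text \<open>Shifted sequence: Sseq k = S_{k-1}, so Sseq 0 = S_{-1} = 0, Sseq 1 = S_0 = 1,
  and S_i = C^(2^(i-1)) S_{i-1} + D^(2^(i-1)) S_{i-2} for i >= 1.\<close>
fun Sseq :: "'a::field \<Rightarrow> 'a \<Rightarrow> nat \<Rightarrow> 'a" where
  "Sseq C D 0 = 0"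
| "Sseq C D (Suc 0) = 1"
| "Sseq C D (Suc (Suc n)) = C ^ (2 ^ n) * Sseq C D (Suc n) + D ^ (2 ^ n) * Sseq C D n"

definition S :: "'a::field \<Rightarrow> 'a \<Rightarrow> int \<Rightarrow> 'a" where
  "S C D i = Sseq C D (nat (i + 1))"

end

theory Submission
  imports Defs "HOL-Computational_Algebra.Polynomial"
begin

text \<open>
  Let F be the subfield fixed by x \<mapsto> x^q = frob m x. For any x, t = x^q + x lies in F,
  P x = b (t + \<delta>)^6 + x, and P(x)^q + P(x) + B = f t with the 2-linearized polynomial
  f t = A t^4 + A C t^2 + t over F. Hence the claimed inverse is correct as soon as L (f t) = t
  on F, where L is the linearized polynomial of the statement.

  Substituting x_j = t^(2^j) makes f(t)^(2^i) a multiple of the defect of x in the recurrence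
  of S, and summation by parts against two solutions of the recurrence gives L (f t) = \<tau> t,
  where \<tau> is the trace of the monodromy matrix of the recurrence over m steps. Frobenius gives
  \<tau>^2 = \<tau>. The monodromy matrix has determinant 1, so \<tau> = 0 would give it a fixed vector,
  i.e. a periodic orbit of the squaring map on initial values; from such an orbit every c in F
  produces an element of ker f on F that is a polynomial of degree at most 2^(m-1) < q in c and
  not identically zero. As f is injective on F because P is, \<tau> = 1.
\<close>

lemma char2_numeral:
  assumes "CHAR('a::comm_ring_1) = 2"
  shows "numeral (Num.Bit0 n) = (0::'a)" and "numeral (Num.Bit1 n) = (1::'a)"
proof -
  have two: "(2::'a) = 0"
    using of_nat_CHAR[where 'a='a] assms by simp
  have "numeral (Num.Bit0 n) = (2::'a) * numeral n"
    by (metis numeral_Bit0 mult_2)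
  with two show Bit0: "numeral (Num.Bit0 n) = (0::'a)"
    by simp
  have "numeral (Num.Bit1 n) = numeral (Num.Bit0 n) + (1::'a)"
    by (simp only: numeral_Bit1 numeral_Bit0)
  with Bit0 show "numeral (Num.Bit1 n) = (1::'a)"
    by simp
qed

lemma char2_add_self: "CHAR('a::ring_1) = 2 \<Longrightarrow> (x::'a) + x = 0"
  using uminus_CHAR_2[of x] by (metis add.right_inverse)

lemmas char2_simps = char2_numeral char2_add_self uminus_CHAR_2

lemma char2_add_eq_0_iff: "CHAR('a::ring_1) = 2 \<Longrightarrow> (x::'a) + y = 0 \<longleftrightarrow> x = y"
  by (metis add_eq_0_iff2 uminus_CHAR_2)

lemma CHAR_eq_2_if_card_UNIV:
  assumes "card (UNIV :: 'a::{field,finite} set) = 2 ^ k" and "k > 0"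
  shows "CHAR('a) = 2"
proof -
  have shift: "bij_betw (\<lambda>y::'a. y + 1) UNIV UNIV"
    by (rule bij_betw_byWitness[where f'="\<lambda>y. y - 1"]) auto
  have "(\<Sum>y\<in>UNIV. (y::'a) + 1) = (\<Sum>y\<in>UNIV. y)"
    using sum.reindex_bij_betw[OF shift, of "\<lambda>y. y"] by simp
  then have "of_nat (2 ^ k) = (0::'a)"
    using assms(1) by (simp add: sum.distrib)
  then have "CHAR('a) dvd 2 ^ k"
    by (simp only: of_nat_eq_0_iff_char_dvd)
  moreover have "prime CHAR('a)"
    by (simp add: finite_imp_CHAR_pos prime_CHAR_semidom)
  ultimately show ?thesis
    using primes_dvd_imp_eq two_is_prime_nat prime_dvd_power by blast
qed

lemma power_card_UNIV_eq_self:
  fixes x :: "'a::{field,finite}"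
  shows "x ^ card (UNIV :: 'a set) = x"
proof (cases "x = 0")
  case False
  let ?U = "UNIV - {0::'a}"
  have scale: "bij_betw (\<lambda>y. x * y) ?U ?U"
    by (rule bij_betw_byWitness[where f'="\<lambda>y. y / x"]) (use False in auto)
  have "(\<Prod>y\<in>?U. x * y) = (\<Prod>y\<in>?U. y)"
    using prod.reindex_bij_betw[OF scale, of "\<lambda>y. y"] by simp
  then have unit: "x ^ card ?U = 1"
    by (simp add: prod.distrib)
  have "card (UNIV :: 'a set) = Suc (card ?U)"
    using finite_UNIV_card_ge_0[where 'a='a] by (simp add: card_Diff_singleton)
  then have "x ^ card (UNIV :: 'a set) = x * x ^ card ?U"
    by (simp only: power_Suc)
  then show ?thesis
    by (simp only: unit mult_1_right)
qed (simp add: finite_UNIV_card_ge_0 power_0_left)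

definition frob :: "nat \<Rightarrow> 'a::comm_monoid_mult \<Rightarrow> 'a" where
  "frob k x = x ^ 2 ^ k"

lemma frob_0 [simp]: "frob 0 x = x"
  by (simp add: frob_def)

lemma frob_square [simp]: "(frob k x)\<^sup>2 = frob (Suc k) x"
  by (simp add: frob_def power_mult[symmetric] mult.commute)

lemma frob_Suc_0: "frob (Suc 0) x = x\<^sup>2"
  by (simp add: frob_def)

lemma frob_mult [simp]: "frob k (x * y) = frob k x * frob k y"
  by (simp add: frob_def power_mult_distrib)

lemma frob_frob [simp]: "frob j (frob k x) = frob (k + j) x"
  by (simp add: frob_def power_mult[symmetric] power_add)

lemma frob_one [simp]: "frob k 1 = 1"
  by (simp add: frob_def)

lemma frob_zero [simp]: "frob k (0::'a::comm_semiring_1) = 0"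
  by (simp add: frob_def power_0_left)

lemma frob_power: "frob k (x ^ n) = frob k x ^ n"
  by (simp add: frob_def power_mult[symmetric] mult.commute)

lemma frob_inverse: "frob k (inverse (x::'a::field)) = inverse (frob k x)"
  by (simp add: frob_def power_inverse)

lemma frob_add:
  "CHAR('a::comm_ring_1) = 2 \<Longrightarrow> frob k (x + y) = frob k x + frob k (y::'a)"
  unfolding frob_def by (rule freshmans_dream') simp_all

lemma frob_sum:
  "CHAR('a::comm_ring_1) = 2 \<Longrightarrow> frob k (\<Sum>i\<in>I. f i) = (\<Sum>i\<in>I. frob k (f i :: 'a))"
  unfolding frob_def by (rule freshmans_dream_sum') simp_all

lemma square_add_char2:
  "CHAR('a::comm_ring_1) = 2 \<Longrightarrow> (x + y)\<^sup>2 = x\<^sup>2 + (y::'a)\<^sup>2"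
  using frob_add[of 1 x y] by (simp add: frob_Suc_0)

fun frob_rec :: "'a::comm_ring_1 \<Rightarrow> 'a \<Rightarrow> 'a \<Rightarrow> 'a \<Rightarrow> nat \<Rightarrow> 'a" where
  "frob_rec C D a b 0 = a"
| "frob_rec C D a b (Suc 0) = b"
| "frob_rec C D a b (Suc (Suc n)) =
     frob n C * frob_rec C D a b (Suc n) + frob n D * frob_rec C D a b n"

lemma Sseq_eq_frob_rec: "Sseq C D n = frob_rec C D 0 1 n"
  by (induction C D n rule: Sseq.induct) (simp_all add: frob_def)

lemma Sseq_add_2: "Sseq C D (n + 2) = frob n C * Sseq C D (n + 1) + frob n D * Sseq C D n"
  by (simp add: Sseq_eq_frob_rec numeral_2_eq_2)

declare Sseq.simps(3) [simp del]

lemma frob_rec_linear: "frob_rec C D a b n = a * frob_rec C D 1 0 n + b * frob_rec C D 0 1 n"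
  by (induction C D a b n rule: frob_rec.induct) (simp_all add: algebra_simps)

lemma frob_rec_square:
  fixes A C D :: "'a::comm_ring_1"
  assumes char: "CHAR('a) = 2" and AD: "A * D = 1"
  shows "(frob_rec C D a b n)\<^sup>2 = frob_rec C D (A * (b\<^sup>2 + C * a\<^sup>2)) (a\<^sup>2) (Suc n)"
proof -
  let ?u = "frob_rec C D a b" and ?v = "frob_rec C D (A * (b\<^sup>2 + C * a\<^sup>2)) (a\<^sup>2)"
  have "(?u n)\<^sup>2 = ?v (Suc n) \<and> (?u (Suc n))\<^sup>2 = ?v (Suc (Suc n))"
  proof (induction n)
    case 0
    have "D * (A * (b\<^sup>2 + C * a\<^sup>2)) = b\<^sup>2 + C * a\<^sup>2"
      using AD by (metis mult.assoc mult.commute mult_1)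
    then show ?case
      by (simp add: algebra_simps char2_simps[OF char])
  next
    case (Suc n)
    have "(?u (Suc (Suc n)))\<^sup>2 = (frob n C * ?u (Suc n))\<^sup>2 + (frob n D * ?u n)\<^sup>2"
      by (simp only: frob_rec.simps square_add_char2[OF char])
    also have "\<dots> = ?v (Suc (Suc (Suc n)))"
      using Suc by (simp add: power_mult_distrib)
    finally show ?case
      using Suc by simp
  qed
  then show ?thesis
    by blast
qed

lemma frob_rec_1_0_Suc:
  fixes A C D :: "'a::comm_ring_1"
  assumes char: "CHAR('a) = 2" and AD: "A * D = 1"
  shows "frob_rec C D 1 0 (Suc n) = D * (frob_rec C D 0 1 n)\<^sup>2"
proof -
  have "(frob_rec C D 0 1 n)\<^sup>2 = A * frob_rec C D 1 0 (Suc n)"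
    using frob_rec_square[OF char AD, of C 0 1 n] frob_rec_linear[of C D A 0] by simp
  then show ?thesis
    using AD by (metis mult.assoc mult.commute mult_1)
qed

text \<open>The monodromy matrix over m steps has the solutions frob_rec C D 1 0 and
  frob_rec C D 0 1 as its columns.\<close>

definition monodromy_trace :: "'a::comm_ring_1 \<Rightarrow> 'a \<Rightarrow> nat \<Rightarrow> 'a" where
  "monodromy_trace C D m = frob_rec C D 1 0 m + frob_rec C D 0 1 (Suc m)"

lemma monodromy_trace_eq_Sseq:
  fixes A C D :: "'a::field"
  assumes char: "CHAR('a) = 2" and AD: "A * D = 1" and "m > 0"
  shows "monodromy_trace C D m = Sseq C D (m + 1) + D * Sseq C D (m - 1) ^ 2"
proof -
  obtain k where k: "m = Suc k"
    using \<open>m > 0\<close> gr0_conv_Suc by blast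
  show ?thesis
    unfolding monodromy_trace_def k Sseq_eq_frob_rec frob_rec_1_0_Suc[OF char AD]
    by (simp add: add.commute)
qed

lemma frob_rec_casorati:
  fixes C D :: "'a::comm_ring_1"
  assumes char: "CHAR('a) = 2"
  shows "D * (frob_rec C D 1 0 n * frob_rec C D 0 1 (Suc n)
              + frob_rec C D 0 1 n * frob_rec C D 1 0 (Suc n)) = frob n D"
proof (induction n)
  case (Suc n)
  let ?r = "frob_rec C D 1 0" and ?s = "frob_rec C D 0 1"
  have "?r (Suc n) * ?s (Suc (Suc n)) + ?s (Suc n) * ?r (Suc (Suc n))
      = frob n D * (?r n * ?s (Suc n) + ?s n * ?r (Suc n))"
    by (simp add: algebra_simps char2_simps[OF char])
  then show ?case
    using Suc by (metis frob_square mult.left_commute power2_eq_square)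
qed simp

lemma frob_rec_fixed:
  fixes C D :: "'a::comm_ring_1"
  assumes char: "CHAR('a) = 2"
    and "frob m C = C" "frob m D = D" "frob m a = a" "frob m b = b"
  shows "frob m (frob_rec C D a b n) = frob_rec C D a b n"
proof -
  have "frob m (frob_rec C D a b n) = frob_rec C D a b n
      \<and> frob m (frob_rec C D a b (Suc n)) = frob_rec C D a b (Suc n)"
  proof (induction n)
    case (Suc n)
    have "frob m (frob_rec C D a b (Suc (Suc n)))
        = frob n (frob m C) * frob m (frob_rec C D a b (Suc n))
          + frob n (frob m D) * frob m (frob_rec C D a b n)"
      by (simp add: frob_add[OF char] add.commute)
    then show ?case
      using Suc assms by simp
  qed (use assms in simp)
  then show ?thesis
    by blast
qed

lemma Sseq_backward:
  fixes A C D :: "'a::field"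
  assumes char: "CHAR('a) = 2" and AD: "A * D = 1"
  shows "Sseq C D (n + 2) = C * Sseq C D (n + 1) ^ 2 + D\<^sup>2 * Sseq C D n ^ 4"
proof -
  let ?r = "frob_rec C D 1 0" and ?s = "frob_rec C D 0 1"
  have "(?r (Suc n))\<^sup>2 = A * C * ?r (Suc (Suc n)) + ?s (Suc (Suc n))"
    using frob_rec_square[OF char AD, of C 1 0 "Suc n"] frob_rec_linear[of C D "A * C" 1 "Suc (Suc n)"]
    by (simp del: frob_rec.simps)
  then have "D\<^sup>2 * ?s n ^ 4 = C * (A * D) * ?s (Suc n) ^ 2 + ?s (Suc (Suc n))"
    unfolding frob_rec_1_0_Suc[OF char AD]
    by (simp add: algebra_simps power_mult_distrib flip: power_mult)
  then show ?thesis
    unfolding Sseq_eq_frob_rec AD by (simp add: char2_simps[OF char] numeral_2_eq_2)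
qed

definition rec_defect :: "'a::comm_ring_1 \<Rightarrow> 'a \<Rightarrow> (nat \<Rightarrow> 'a) \<Rightarrow> nat \<Rightarrow> 'a" where
  "rec_defect C D x i = x (i + 2) + frob i C * x (i + 1) + frob i D * x i"

lemma sum_rec_defect_forward:
  fixes A C D :: "'a::field" and x :: "nat \<Rightarrow> 'a"
  assumes char: "CHAR('a) = 2" and AD: "A * D = 1"
  shows "(\<Sum>i<n. D * frob (i + 1) A * Sseq C D (i + 1) * rec_defect C D x i)
       = x 0 + D * frob n A * (Sseq C D (n + 1) * x n + Sseq C D n * x (n + 1))"
proof (induction n)
  case 0
  have "D * A = 1"
    using AD by (simp add: mult.commute)
  then show ?case
    by (simp add: char2_simps[OF char])
next
  case (Suc n)
  let ?a = "frob n A" and ?s = "Sseq C D"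
  have "?a * frob n D = 1"
    using AD by (metis frob_mult frob_one)
  then have unit: "?a * frob n D + 1 = 0"
    by (simp add: char2_simps[OF char])
  have "(\<Sum>i<Suc n. D * frob (i + 1) A * ?s (i + 1) * rec_defect C D x i)
      = x 0 + D * ?a * (?s (n + 1) * x n + ?s n * x (n + 1))
        + D * (?a * ?a) * ?s (n + 1) * rec_defect C D x n"
    using Suc by (simp add: power2_eq_square flip: frob_square)
  also have "\<dots> = x 0 + D * (?a * ?a) * (?s (n + 2) * x (n + 1) + ?s (n + 1) * x (n + 2))
        + (?a * frob n D + 1) * (D * ?a * (?s (n + 1) * x n + ?s n * x (n + 1)))"
    unfolding rec_defect_def Sseq_add_2 by (simp add: algebra_simps char2_simps[OF char])
  finally show ?case
    unfolding unit by (simp add: power2_eq_square flip: frob_square)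
qed

lemma sum_rec_defect_backward:
  fixes A C D :: "'a::field" and x :: "nat \<Rightarrow> 'a"
  assumes char: "CHAR('a) = 2" and AD: "A * D = 1" and "n + 1 \<le> m"
  shows "(\<Sum>i<n. frob (i + 1) (Sseq C D (m - 1 - i)) * rec_defect C D x i)
       = x 0 * D * Sseq C D (m - 1) ^ 2 + x 1 * Sseq C D m
         + x n * frob n D * frob (n + 1) (Sseq C D (m - 1 - n))
         + x (n + 1) * frob n (Sseq C D (m - n))"
  using assms(3)
proof (induction n)
  case 0
  show ?case
    by (simp add: frob_Suc_0 char2_simps[OF char])
next
  case (Suc n)
  let ?s = "Sseq C D"
  obtain j where j: "m - 1 - n = j + 1" "m - n = j + 2" "m - 1 - Suc n = j" "m - Suc n = j + 1"
    using Suc.prems by (intro that[of "m - (n + 2)"]) auto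
  have "frob n (?s (j + 2))
      = frob n C * frob (n + 1) (?s (j + 1)) + frob (n + 1) D * frob (n + 2) (?s j)"
    unfolding Sseq_backward[OF char AD] frob_add[OF char] frob_mult
    by (simp add: frob_def power_mult[symmetric] power_add mult.commute)
  then have step: "x n * frob n D * frob (n + 1) (?s (j + 1)) + x (n + 1) * frob n (?s (j + 2))
        + frob (n + 1) (?s (j + 1)) * rec_defect C D x n
      = x (n + 1) * frob (n + 1) D * frob (n + 2) (?s j) + x (n + 2) * frob (n + 1) (?s (j + 1))"
    unfolding rec_defect_def by (simp add: algebra_simps char2_simps[OF char])
  have "(\<Sum>i<Suc n. frob (i + 1) (?s (m - 1 - i)) * rec_defect C D x i)
      = x 0 * D * ?s (m - 1) ^ 2 + x 1 * ?s m
        + (x n * frob n D * frob (n + 1) (?s (j + 1)) + x (n + 1) * frob n (?s (j + 2))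
           + frob (n + 1) (?s (j + 1)) * rec_defect C D x n)"
    using Suc j by (simp add: algebra_simps)
  with j show ?case
    unfolding step by (simp add: algebra_simps)
qed

lemma sum_rec_defect_periodic:
  fixes A C D :: "'a::field" and x :: "nat \<Rightarrow> 'a"
  assumes char: "CHAR('a) = 2" and AD: "A * D = 1" and "frob m A = A" and "m > 0"
    and "x m = x 0" and "x (m + 1) = x 1"
  shows "(\<Sum>i<m. (frob (i + 1) (Sseq C D (m - 1 - i)) + D * frob (i + 1) A * Sseq C D (i + 1))
                  * rec_defect C D x i)
       = monodromy_trace C D m * x 0"
proof -
  obtain k where k: "m = Suc k"
    using \<open>m > 0\<close> gr0_conv_Suc by blast
  have forward: "(\<Sum>i<m. D * frob (i + 1) A * Sseq C D (i + 1) * rec_defect C D x i)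
      = x 0 + D * A * (Sseq C D (m + 1) * x 0 + Sseq C D m * x 1)"
    using sum_rec_defect_forward[OF char AD, where n=m and C=C and x=x] assms(3,5,6) by simp
  have "(\<Sum>i<k. frob (i + 1) (Sseq C D (m - 1 - i)) * rec_defect C D x i)
      = x 0 * D * Sseq C D (m - 1) ^ 2 + x 1 * Sseq C D m
        + x k * frob k D * frob (k + 1) (Sseq C D (m - 1 - k)) + x (k + 1) * frob k (Sseq C D (m - k))"
    by (rule sum_rec_defect_backward[OF char AD]) (simp add: k)
  then have backward: "(\<Sum>i<m. frob (i + 1) (Sseq C D (m - 1 - i)) * rec_defect C D x i)
      = x 0 * D * Sseq C D (m - 1) ^ 2 + x 1 * Sseq C D m + x 0"
    using assms(5) by (simp add: k)
  show ?thesis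
    unfolding distrib_right sum.distrib backward forward monodromy_trace_eq_Sseq[OF char AD \<open>m > 0\<close>]
    using AD by (simp add: algebra_simps char2_simps[OF char])
qed

lemma linear_system_2_unique:
  fixes r s r' s' :: "'a::idom"
  assumes det: "r * s' - s * r' \<noteq> 0"
    and "a * r + b * s = a' * r + b' * s" and "a * r' + b * s' = a' * r' + b' * s'"
  shows "a = a' \<and> b = b'"
proof -
  have eq1: "(a - a') * r + (b - b') * s = 0" and eq2: "(a - a') * r' + (b - b') * s' = 0"
    using assms(2,3) by (simp_all add: algebra_simps)
  have "(a - a') * (r * s' - s * r') = s' * ((a - a') * r + (b - b') * s) - s * ((a - a') * r' + (b - b') * s')"
    and "(b - b') * (r * s' - s * r') = r * ((a - a') * r' + (b - b') * s') - r' * ((a - a') * r + (b - b') * s)"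
    by (simp_all add: algebra_simps)
  then show ?thesis
    using det unfolding eq1 eq2 by simp
qed

lemma monodromy_trace_square:
  fixes A C D :: "'a::comm_ring_1"
  assumes char: "CHAR('a) = 2" and AD: "A * D = 1" and "frob m C = C" and "frob m D = D"
  shows "(monodromy_trace C D m)\<^sup>2 = monodromy_trace C D m"
proof -
  let ?r = "frob_rec C D 1 0" and ?s = "frob_rec C D 0 1"
  have r: "(?r m)\<^sup>2 = A * C * ?r (Suc m) + ?s (Suc m)"
    using frob_rec_square[OF char AD, of C 1 0 m] frob_rec_linear[of C D "A * C" 1 "Suc m"]
    by (simp del: frob_rec.simps)
  have s: "(?s (Suc m))\<^sup>2 = A * ?r (Suc (Suc m))"
    using frob_rec_square[OF char AD, of C 0 1 "Suc m"] frob_rec_linear[of C D A 0 "Suc (Suc m)"]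
    by (simp del: frob_rec.simps)
  have rec: "?r (Suc (Suc m)) = C * ?r (Suc m) + D * ?r m"
    using assms(3,4) by simp
  have "(?r m + ?s (Suc m))\<^sup>2 = A * C * ?r (Suc m) + ?s (Suc m) + A * (C * ?r (Suc m) + D * ?r m)"
    unfolding square_add_char2[OF char] r s rec ..
  also have "\<dots> = ?s (Suc m) + (A * D) * ?r m"
    by (simp add: algebra_simps char2_simps[OF char])
  finally have "(?r m + ?s (Suc m))\<^sup>2 = ?s (Suc m) + (A * D) * ?r m" .
  then show ?thesis
    using AD by (simp add: add.commute monodromy_trace_def)
qed

text \<open>Squaring a solution gives the solution started one step later from these initial
  values, see frob_frob_rec.\<close>

definition square_initial :: "'a::comm_ring_1 \<Rightarrow> 'a \<Rightarrow> 'a \<times> 'a \<Rightarrow> 'a \<times> 'a" where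
  "square_initial A C v = (A * ((snd v)\<^sup>2 + C * (fst v)\<^sup>2), (fst v)\<^sup>2)"

lemma frob_frob_rec:
  fixes A C D :: "'a::comm_ring_1"
  assumes char: "CHAR('a) = 2" and AD: "A * D = 1"
  shows "frob j (frob_rec C D a b n)
       = frob_rec C D (fst ((square_initial A C ^^ j) (a, b))) (snd ((square_initial A C ^^ j) (a, b)))
           (n + j)"
proof (induction j)
  case (Suc j)
  then show ?case
    using frob_rec_square[OF char AD] by (simp add: square_initial_def flip: frob_square)
qed simp

lemma frob_rec_monodromy_fixed_vector:
  fixes C D :: "'a::comm_ring_1"
  assumes char: "CHAR('a) = 2" and "frob m C = C" and "frob m D = D"
    and det: "frob_rec C D 1 0 m * frob_rec C D 0 1 (Suc m)
              + frob_rec C D 0 1 m * frob_rec C D 1 0 (Suc m) = 1"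
    and "monodromy_trace C D m = 0"
  obtains a b where "(a, b) \<noteq> (0, 0)" and "frob m a = a" and "frob m b = b"
    and "frob_rec C D a b m = a" and "frob_rec C D a b (Suc m) = b"
proof -
  let ?r = "frob_rec C D 1 0" and ?s = "frob_rec C D 0 1"
  have rs: "?r m = ?s (Suc m)"
    using \<open>monodromy_trace C D m = 0\<close> unfolding monodromy_trace_def
    by (simp add: char2_add_eq_0_iff[OF char])
  have fixed: "frob m (?r n) = ?r n" "frob m (?s n) = ?s n" for n
    using frob_rec_fixed[OF char assms(2,3)] by simp_all
  show thesis
  proof (cases "?s m = 0 \<and> ?r m + 1 = 0")
    case True
    then have "?r m = 1"
      by (simp add: char2_add_eq_0_iff[OF char])
    with True rs show thesis
      by (intro that[of 0 1]) simp_all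
  next
    case False
    have "frob_rec C D (?s m) (?r m + 1) m = ?s m"
      by (subst frob_rec_linear) (simp add: algebra_simps char2_simps[OF char])
    moreover have "frob_rec C D (?s m) (?r m + 1) (Suc m) = ?r m + 1"
      using det rs by (subst frob_rec_linear) (simp add: algebra_simps)
    ultimately show thesis
      using False fixed by (intro that[of "?s m" "?r m + 1"]) (auto simp: frob_add[OF char])
  qed
qed

lemma square_initial_iterate_fixed:
  fixes A C D :: "'a::idom"
  assumes char: "CHAR('a) = 2" and AD: "A * D = 1"
    and det: "frob_rec C D 1 0 m * frob_rec C D 0 1 (Suc m)
              + frob_rec C D 0 1 m * frob_rec C D 1 0 (Suc m) = 1"
    and "frob m a = a" and "frob m b = b"
    and "frob_rec C D a b m = a" and "frob_rec C D a b (Suc m) = b"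
  shows "(square_initial A C ^^ m) (a, b) = (a, b)"
proof -
  let ?r = "frob_rec C D 1 0" and ?s = "frob_rec C D 0 1"
  obtain a' b' where it: "(square_initial A C ^^ m) (a, b) = (a', b')"
    by (cases "(square_initial A C ^^ m) (a, b)")
  have "frob_rec C D a' b' m = a"
    using frob_frob_rec[OF char AD, where j=m and a=a and b=b and n=0 and C=C] it assms(4) by simp
  moreover have "frob_rec C D a' b' (Suc m) = b"
    using frob_frob_rec[OF char AD, where j=m and a=a and b=b and n=1 and C=C] it assms(5) by simp
  moreover have "?r m * ?s (Suc m) - ?s m * ?r (Suc m) \<noteq> 0"
    using det by (simp add: minus_CHAR_2[OF char])
  ultimately have "a' = a \<and> b' = b"
    using assms(6,7) linear_system_2_unique[of "?r m" "?s (Suc m)" "?s m" "?r (Suc m)"]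
    by (metis frob_rec_linear)
  then show ?thesis
    using it by simp
qed

lemma sum_frob_shift_cyclic:
  fixes c :: "'a::comm_ring_1"
  assumes "frob m c = c" and "g m = g 0"
  shows "(\<Sum>j<m. frob (Suc j) c * g (Suc j)) = (\<Sum>j<m. frob j c * g j)"
proof -
  have "(\<Sum>j<Suc m. frob j c * g j) = frob 0 c * g 0 + (\<Sum>j<m. frob (Suc j) c * g (Suc j))"
    by (rule sum.lessThan_Suc_shift)
  moreover have "frob m c * g m = frob 0 c * g 0"
    using assms by simp
  ultimately show ?thesis
    by (simp add: add.commute)
qed

lemma kernel_element_of_periodic_orbit:
  fixes A C c :: "'a::comm_ring_1"
  assumes char: "CHAR('a) = 2" and "frob m A = A" and "frob m C = C"
    and "frob m a = a" and "frob m b = b" and "frob m c = c"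
    and periodic: "(square_initial A C ^^ m) (a, b) = (a, b)"
  defines "x \<equiv> \<Sum>j<m. frob j c * fst ((square_initial A C ^^ j) (a, b))"
    and "y \<equiv> \<Sum>j<m. frob j c * snd ((square_initial A C ^^ j) (a, b))"
  shows "frob m x = x" and "A * x ^ 4 + A * C * x\<^sup>2 + x = 0" and "y = x\<^sup>2"
proof -
  define p where "p j = fst ((square_initial A C ^^ j) (a, b))" for j
  define r where "r j = snd ((square_initial A C ^^ j) (a, b))" for j
  have p_Suc: "p (Suc j) = A * ((r j)\<^sup>2 + C * (p j)\<^sup>2)" and r_Suc: "r (Suc j) = (p j)\<^sup>2" for j
    unfolding p_def r_def by (simp_all add: square_initial_def)
  have p_r_fixed: "frob m (p j) = p j \<and> frob m (r j) = r j" for j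
  proof (induction j)
    case 0
    then show ?case
      using assms(4,5) unfolding p_def r_def by simp
  next
    case (Suc j)
    then show ?case
      using assms(2,3) unfolding p_Suc r_Suc
      by (simp add: frob_add[OF char] frob_power del: frob_square)
  qed
  have x_square: "x\<^sup>2 = (\<Sum>j<m. frob (Suc j) c * (p j)\<^sup>2)"
    and y_square: "y\<^sup>2 = (\<Sum>j<m. frob (Suc j) c * (r j)\<^sup>2)"
    unfolding x_def y_def p_def r_def frob_Suc_0[symmetric] frob_sum[OF char]
    by (simp_all add: frob_Suc_0)
  have "p m = p 0" and "r m = r 0"
    using periodic unfolding p_def r_def by simp_all
  then show y: "y = x\<^sup>2"
    unfolding x_square r_Suc[symmetric] using sum_frob_shift_cyclic[OF assms(6), of r] by (simp add: y_def r_def)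
  have "A * (y\<^sup>2 + C * x\<^sup>2) = (\<Sum>j<m. frob (Suc j) c * p (Suc j))"
    unfolding x_square y_square p_Suc by (simp add: sum_distrib_left sum.distrib algebra_simps)
  also have "\<dots> = x"
    using sum_frob_shift_cyclic[OF assms(6), of p] \<open>p m = p 0\<close> by (simp add: x_def p_def)
  finally have "x = A * (x ^ 4 + C * x\<^sup>2)"
    unfolding y by (simp flip: power_mult)
  then show "A * x ^ 4 + A * C * x\<^sup>2 + x = 0"
    by (simp add: algebra_simps char2_simps[OF char])
  have "frob (j + m) c = frob j c" for j
    using assms(6) by (metis frob_frob add.commute)
  then show "frob m x = x"
    unfolding x_def frob_sum[OF char] using p_r_fixed by (simp add: p_def)
qed

lemma exists_sum_frob_nonzero:
  fixes \<alpha> :: "nat \<Rightarrow> 'a::field"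
  assumes "\<alpha> 0 \<noteq> 0" and "m > 0" and "finite K" and "2 ^ m \<le> card K"
  shows "\<exists>c\<in>K. (\<Sum>j<m. frob j c * \<alpha> j) \<noteq> 0"
proof (rule ccontr)
  assume vanish: "\<not> ?thesis"
  define p where "p = (\<Sum>j<m. monom (\<alpha> j) (2 ^ j))"
  have eval: "poly p c = (\<Sum>j<m. frob j c * \<alpha> j)" for c
    unfolding p_def poly_sum poly_monom frob_def by (simp add: mult.commute)
  have "coeff p 1 = (\<Sum>j<m. if 2 ^ j = (1::nat) then \<alpha> j else 0)"
    unfolding p_def coeff_sum coeff_monom by simp
  also have "\<dots> = (\<Sum>j\<in>{0}. \<alpha> j)"
    by (rule sum.mono_neutral_cong_right) (use \<open>m > 0\<close> in auto)
  finally have "p \<noteq> 0"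
    using assms(1) by auto
  have "degree p \<le> 2 ^ (m - 1)"
    unfolding p_def
  proof (rule degree_sum_le)
    fix j assume "j \<in> {..<m}"
    then have "(2::nat) ^ j \<le> 2 ^ (m - 1)"
      by (intro power_increasing) auto
    then show "degree (monom (\<alpha> j) (2 ^ j)) \<le> 2 ^ (m - 1)"
      using degree_monom_le order_trans by blast
  qed simp
  moreover have "card K \<le> card {x. poly p x = 0}"
    using vanish eval \<open>p \<noteq> 0\<close> by (intro card_mono poly_roots_finite) auto
  moreover have "card {x. poly p x = 0} \<le> degree p"
    by (rule card_poly_roots_bound[OF \<open>p \<noteq> 0\<close>])
  moreover have "(2::nat) ^ (m - 1) < 2 ^ m"
    using \<open>m > 0\<close> by simp
  ultimately show False
    using assms(4) by linarith
qed

lemma monodromy_trace_ne_0: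
  fixes A C D :: "'a::{field,finite}"
  assumes char: "CHAR('a) = 2" and AD: "A * D = 1"
    and "frob m A = A" and "frob m C = C" and "frob m D = D" and "m > 0"
    and card: "2 ^ m \<le> card {x::'a. frob m x = x}"
    and inj: "\<And>t. frob m t = t \<Longrightarrow> A * t ^ 4 + A * C * t\<^sup>2 + t = 0 \<Longrightarrow> t = 0"
  shows "monodromy_trace C D m \<noteq> 0"
proof
  assume trace: "monodromy_trace C D m = 0"
  have "D \<noteq> 0"
    using AD by auto
  then have det: "frob_rec C D 1 0 m * frob_rec C D 0 1 (Suc m)
      + frob_rec C D 0 1 m * frob_rec C D 1 0 (Suc m) = 1"
    using frob_rec_casorati[OF char, of D C m] assms(5) by simp
  obtain a b where ab: "(a, b) \<noteq> (0, 0)" "frob m a = a" "frob m b = b"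
    and "frob_rec C D a b m = a" "frob_rec C D a b (Suc m) = b"
    using frob_rec_monodromy_fixed_vector[OF char assms(4,5) det trace] by blast
  then have periodic: "(square_initial A C ^^ m) (a, b) = (a, b)"
    using square_initial_iterate_fixed[OF char AD det] by blast
  let ?orbit = "\<lambda>sel j. sel ((square_initial A C ^^ j) (a, b))"
  have kernel: "(\<Sum>j<m. frob j c * ?orbit fst j) = 0 \<and> (\<Sum>j<m. frob j c * ?orbit snd j) = 0"
    if "frob m c = c" for c
  proof -
    note x = kernel_element_of_periodic_orbit[OF char assms(3,4) ab(2,3) that periodic]
    show ?thesis
      using inj[OF x(1,2)] x(3) by simp
  qed
  obtain sel where sel: "sel = fst \<or> sel = snd" and "?orbit sel 0 \<noteq> 0"
    using ab(1) by (metis funpow_0 fst_conv snd_conv prod.collapse)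
  moreover have "finite {x::'a. frob m x = x}"
    by simp
  ultimately obtain c where "frob m c = c" and "(\<Sum>j<m. frob j c * ?orbit sel j) \<noteq> 0"
    using exists_sum_frob_nonzero[where \<alpha>="?orbit sel", OF _ \<open>m > 0\<close> _ card] by auto
  with kernel sel show False
    by blast
qed

lemma frob_double_eq_self:
  fixes x :: "'a::{field,finite}"
  assumes "card (UNIV :: 'a set) = (2 ^ m)\<^sup>2"
  shows "frob (m + m) x = x"
  using power_card_UNIV_eq_self[of x] assms by (simp add: frob_def power_add power2_eq_square)

lemma card_frob_fixed_ge:
  fixes \<delta> :: "'a::{field,finite}"
  assumes char: "CHAR('a) = 2" and card: "card (UNIV :: 'a set) = (2 ^ m)\<^sup>2"
    and "frob m \<delta> \<noteq> \<delta>"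
  shows "2 ^ m \<le> card {x::'a. frob m x = x}"
proof -
  let ?F = "{x::'a. frob m x = x}" and ?tr = "\<lambda>x::'a. x + frob m x"
  have tr_fixed: "?tr x \<in> ?F" for x
    using frob_double_eq_self[OF card] by (simp add: frob_add[OF char] add.commute)
  have tr_add: "?tr (x + y) = ?tr x + ?tr y" for x y
    by (simp add: frob_add[OF char] algebra_simps)
  have tr_zero: "frob m x = x" if "?tr x = 0" for x
    using that by (simp add: char2_add_eq_0_iff[OF char])
  have "inj (\<lambda>x. (?tr x, ?tr (\<delta> * x)))"
  proof (rule injI)
    fix x y
    assume "(?tr x, ?tr (\<delta> * x)) = (?tr y, ?tr (\<delta> * y))"
    then have "?tr (x + y) = 0" and "?tr (\<delta> * (x + y)) = 0"
      unfolding tr_add distrib_left by (simp_all add: char2_simps[OF char])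
    then have "frob m \<delta> * (x + y) = \<delta> * (x + y)"
      using tr_zero by (metis frob_mult)
    then have "x + y = 0"
      using assms(3) by simp
    then show "x = y"
      by (simp add: char2_add_eq_0_iff[OF char])
  qed
  moreover have "range (\<lambda>x. (?tr x, ?tr (\<delta> * x))) \<subseteq> ?F \<times> ?F"
    using tr_fixed by blast
  ultimately have "card (UNIV :: 'a set) \<le> card (?F \<times> ?F)"
    by (intro card_inj_on_le) auto
  then have "(2 ^ m)\<^sup>2 \<le> (card ?F)\<^sup>2"
    using card by (simp add: card_cartesian_product power2_eq_square)
  then show ?thesis
    by (rule power2_le_imp_le) simp
qed

lemma sixth_power_add_char2:
  fixes b t \<delta> d :: "'a::comm_ring_1"
  assumes char: "CHAR('a) = 2"
  shows "b * (t + \<delta>) ^ 6 + b * (t + d) ^ 6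
       = b * (\<delta> + d)\<^sup>2 * t ^ 4 + b * (\<delta> + d) ^ 4 * t\<^sup>2 + (b * d ^ 6 + b * \<delta> ^ 6)"
proof -
  have fourth: "(x + y) ^ 4 = x ^ 4 + y ^ 4" for x y :: 'a
    using frob_add[OF char, of 2 x y] by (simp add: frob_def)
  have "(t + y) ^ 6 = t ^ 6 + t ^ 4 * y\<^sup>2 + t\<^sup>2 * y ^ 4 + y ^ 6" for y :: 'a
  proof -
    have "(t + y) ^ 6 = (t + y) ^ 4 * (t + y)\<^sup>2"
      by (simp flip: power_add)
    then show ?thesis
      unfolding fourth square_add_char2[OF char] by (simp add: algebra_simps flip: power_add)
  qed
  then show ?thesis
    unfolding fourth square_add_char2[OF char] by (simp add: algebra_simps char2_simps[OF char])
qed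

lemma trace_sixth_power:
  fixes b \<delta> t A B C :: "'a::comm_ring_1"
  assumes char: "CHAR('a) = 2" and "frob m b = b" and "frob m t = t"
    and A: "A = b * (\<delta> + frob m \<delta>)\<^sup>2" and C: "C = (\<delta> + frob m \<delta>)\<^sup>2"
    and B: "B = b * frob m \<delta> ^ 6 + b * \<delta> ^ 6"
  shows "b * (t + \<delta>) ^ 6 + frob m (b * (t + \<delta>) ^ 6) = A * t ^ 4 + A * C * t\<^sup>2 + B"
proof -
  have "frob m (b * (t + \<delta>) ^ 6) = b * (t + frob m \<delta>) ^ 6"
    using assms(2,3) by (simp add: frob_power frob_add[OF char])
  then show ?thesis
    by (simp only: sixth_power_add_char2[OF char] A B C) (simp add: algebra_simps flip: power_add)
qed

text \<open>A nonzero kernel element t gives two points of traces t and 0 with the same image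
  under P.\<close>

lemma linearized_injective_if_bij:
  fixes b \<delta> t A C :: "'a::field"
  assumes char: "CHAR('a) = 2" and period: "\<And>x::'a. frob (m + m) x = x"
    and "frob m b = b" and "frob m \<delta> \<noteq> \<delta>"
    and A: "A = b * (\<delta> + frob m \<delta>)\<^sup>2" and C: "C = (\<delta> + frob m \<delta>)\<^sup>2"
    and bij: "bij (\<lambda>x. b * (frob m x + x + \<delta>) ^ 6 + x)"
    and "frob m t = t" and kernel: "A * t ^ 4 + A * C * t\<^sup>2 + t = 0"
  shows "t = 0"
proof -
  let ?P = "\<lambda>x. b * (frob m x + x + \<delta>) ^ 6 + x" and ?tr = "\<lambda>x::'a. x + frob m x"
  define T where "T = \<delta> + frob m \<delta>"
  have "T \<noteq> 0"
    using assms(4) unfolding T_def by (simp add: char2_add_eq_0_iff[OF char])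
  have "frob m T = T"
    unfolding T_def using period[of \<delta>] by (simp add: frob_add[OF char] add.commute)
  have P_eq: "?P x = b * (u + \<delta>) ^ 6 + x" if "?tr x = u" for x u
    using that by (simp add: add.commute)
  have tr_add: "?tr (x + y) = ?tr x + ?tr y" for x y
    by (simp add: frob_add[OF char] algebra_simps)
  define x where "x = t / T * \<delta>"
  have "?tr x = t / T * T"
    using \<open>frob m t = t\<close> \<open>frob m T = T\<close> unfolding x_def T_def
    by (simp add: divide_inverse frob_inverse algebra_simps)
  then have tr_x: "?tr x = t"
    using \<open>T \<noteq> 0\<close> by simp
  define s where "s = b * (t + \<delta>) ^ 6 + b * (0 + \<delta>) ^ 6"
  have "?tr s = ?tr (b * (t + \<delta>) ^ 6) + ?tr (b * (0 + \<delta>) ^ 6)"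
    unfolding s_def tr_add ..
  also have "\<dots> = (A * t ^ 4 + A * C * t\<^sup>2 + t) + t"
    using trace_sixth_power[OF char assms(3) \<open>frob m t = t\<close> A C refl]
      trace_sixth_power[OF char assms(3) frob_zero A C refl]
    by (simp only:) (simp add: char2_simps[OF char])
  finally have "?tr s = (A * t ^ 4 + A * C * t\<^sup>2 + t) + t" .
  then have tr_s: "?tr s = t"
    unfolding kernel by simp
  have "?tr (x + s) = 0"
    unfolding tr_add tr_x tr_s by (rule char2_add_self[OF char])
  then have "?P (x + s) = ?P x"
    unfolding P_eq[OF tr_x] P_eq[of "x + s" 0] s_def by (simp add: algebra_simps char2_simps[OF char])
  then have "s = 0"
    using bij unfolding bij_def inj_def by (metis add_cancel_left_right)
  then show ?thesis
    using tr_s by simp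
qed

lemma S_eq_Sseq:
  "S C D (int i) = Sseq C D (i + 1)"
  "i < m \<Longrightarrow> S C D (int m - 2 - int i) = Sseq C D (m - 1 - i)"
  unfolding S_def by (simp_all add: nat_add_distrib nat_diff_distrib')

lemma linearized_power_eq_rec_defect:
  fixes A C D t :: "'a::comm_ring_1"
  assumes char: "CHAR('a) = 2" and AD: "A * D = 1"
  shows "(A * t ^ 4 + A * C * t\<^sup>2 + t) ^ 2 ^ i = frob i A * rec_defect C D (\<lambda>j. frob j t) i"
proof -
  have "A * t ^ 4 + A * C * t\<^sup>2 + t = A * (frob 2 t + C * frob 1 t + D * t)"
    by (simp add: frob_def distrib_left mult.assoc[symmetric] AD)
  then show ?thesis
    unfolding rec_defect_def frob_def[symmetric] by (simp add: frob_add[OF char] add.commute)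
qed

lemma inverse_sum_coefficient:
  fixes A C D :: "'a::field"
  assumes "A \<noteq> 0" and D: "D = inverse A" and "i < m"
  shows "(D ^ 2 ^ i * S C D (int m - 2 - int i) ^ 2 ^ (i + 1) + D powi (1 - 2 ^ i) * S C D (int i))
           * frob i A
       = frob (i + 1) (Sseq C D (m - 1 - i)) + D * frob (i + 1) A * Sseq C D (i + 1)"
proof -
  have "(1 - 2 ^ i :: int) = - int (2 ^ i - 1)"
    by (simp add: of_nat_diff)
  then have "D powi (1 - 2 ^ i) = inverse (D ^ (2 ^ i - 1))"
    by (simp only: power_int_minus power_int_of_nat)
  then have "D powi (1 - 2 ^ i) = A ^ (2 ^ i - 1)"
    using D by (simp add: power_inverse)
  then have "D ^ 2 ^ i * S C D (int m - 2 - int i) ^ 2 ^ (i + 1) + D powi (1 - 2 ^ i) * S C D (int i)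
      = frob i D * frob (i + 1) (Sseq C D (m - 1 - i)) + A ^ (2 ^ i - 1) * Sseq C D (i + 1)"
    using \<open>i < m\<close> by (simp add: S_eq_Sseq frob_def)
  moreover have "frob i D * frob i A = 1"
    using assms(1,2) by (simp add: frob_def power_inverse)
  moreover have "A ^ (2 ^ i - 1) * frob i A = D * frob (i + 1) A"
  proof -
    have "D * frob (i + 1) A = (D * A) * (A ^ (2 ^ i - 1) * frob i A)"
      by (simp add: frob_def power_add[symmetric] mult_2[symmetric] algebra_simps flip: power_Suc)
    then show ?thesis
      using assms(1,2) by simp
  qed
  moreover have "(frob i D * X + A ^ (2 ^ i - 1) * Y) * frob i A
      = X * (frob i D * frob i A) + (A ^ (2 ^ i - 1) * frob i A) * Y" for X Y
    by (simp add: algebra_simps)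
  ultimately show ?thesis
    by simp
qed

lemma linearized_inverse_sum:
  fixes A C D t :: "'a::field"
  assumes char: "CHAR('a) = 2" and "A \<noteq> 0" and D: "D = inverse A" and "frob m A = A"
    and "m > 0" and "frob m t = t"
  shows "(\<Sum>i<m. (D ^ 2 ^ i * S C D (int m - 2 - int i) ^ 2 ^ (i + 1)
                  + D powi (1 - 2 ^ i) * S C D (int i)) * (A * t ^ 4 + A * C * t\<^sup>2 + t) ^ 2 ^ i)
       = monodromy_trace C D m * t"
proof -
  have AD: "A * D = 1"
    using assms(2,3) by simp
  have "(D ^ 2 ^ i * S C D (int m - 2 - int i) ^ 2 ^ (i + 1) + D powi (1 - 2 ^ i) * S C D (int i))
          * (A * t ^ 4 + A * C * t\<^sup>2 + t) ^ 2 ^ i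
      = (frob (i + 1) (Sseq C D (m - 1 - i)) + D * frob (i + 1) A * Sseq C D (i + 1))
          * rec_defect C D (\<lambda>j. frob j t) i" if "i < m" for i
    unfolding linearized_power_eq_rec_defect[OF char AD] mult.assoc[symmetric]
      inverse_sum_coefficient[OF assms(2,3) that] ..
  then have "(\<Sum>i<m. (D ^ 2 ^ i * S C D (int m - 2 - int i) ^ 2 ^ (i + 1)
                  + D powi (1 - 2 ^ i) * S C D (int i)) * (A * t ^ 4 + A * C * t\<^sup>2 + t) ^ 2 ^ i)
      = (\<Sum>i<m. (frob (i + 1) (Sseq C D (m - 1 - i)) + D * frob (i + 1) A * Sseq C D (i + 1))
          * rec_defect C D (\<lambda>j. frob j t) i)"
    by (intro sum.cong) auto
  also have "\<dots> = monodromy_trace C D m * t"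
  proof -
    have "frob (m + 1) t = frob 1 t"
      using \<open>frob m t = t\<close> frob_frob[of 1 m t] by simp
    then show ?thesis
      using sum_rec_defect_periodic[OF char AD assms(4,5), of "\<lambda>j. frob j t" C] \<open>frob m t = t\<close>
      by simp
  qed
  finally show ?thesis .
qed

lemma monodromy_trace_eq_1:
  fixes A C D :: "'a::{field,finite}"
  assumes char: "CHAR('a) = 2" and AD: "A * D = 1"
    and "frob m A = A" and "frob m C = C" and "frob m D = D" and "m > 0"
    and "2 ^ m \<le> card {x::'a. frob m x = x}"
    and "\<And>t. frob m t = t \<Longrightarrow> A * t ^ 4 + A * C * t\<^sup>2 + t = 0 \<Longrightarrow> t = 0"
  shows "monodromy_trace C D m = 1"
  using monodromy_trace_square[OF char AD assms(4,5)] monodromy_trace_ne_0[OF assms]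
  by (simp add: power2_eq_square)

lemma inverse_formula_left_inverse:
  fixes b \<delta> A B C D :: "'a::{field,finite}"
  assumes "m > 0" and card: "card (UNIV :: 'a set) = (2 ^ m)\<^sup>2"
    and "frob m b = b" and "b \<noteq> 0" and "frob m \<delta> \<noteq> \<delta>"
    and A: "A = b * (\<delta> + frob m \<delta>)\<^sup>2" and C: "C = (\<delta> + frob m \<delta>)\<^sup>2"
    and D: "D = inverse A"
    and B: "B = b * frob m \<delta> ^ 6 + b * \<delta> ^ 6"
    and P: "P = (\<lambda>x. b * (frob m x + x + \<delta>) ^ 6 + x)" and "bij P"
  shows "P x + b * (\<delta> + (\<Sum>i<m. (D ^ 2 ^ i * S C D (int m - 2 - int i) ^ 2 ^ (i + 1)
                  + D powi (1 - 2 ^ i) * S C D (int i)) * (frob m (P x) + P x + B) ^ 2 ^ i)) ^ 6 = x"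
proof -
  have "card (UNIV :: 'a set) = 2 ^ (2 * m)"
    using card by (simp add: power_mult[symmetric] mult.commute)
  then have char: "CHAR('a) = 2"
    by (rule CHAR_eq_2_if_card_UNIV) (use \<open>m > 0\<close> in simp)
  note period = frob_double_eq_self[OF card]
  have "\<delta> + frob m \<delta> \<noteq> 0"
    using assms(5) by (simp add: char2_add_eq_0_iff[OF char])
  then have "A \<noteq> 0"
    using A \<open>b \<noteq> 0\<close> by simp
  then have AD: "A * D = 1"
    using D by simp
  have "frob m (\<delta> + frob m \<delta>) = \<delta> + frob m \<delta>"
    using period[of \<delta>] by (simp add: frob_add[OF char] add.commute)
  then have fixed: "frob m A = A" "frob m C = C" "frob m D = D"
    using A C D \<open>frob m b = b\<close> by (simp_all add: frob_power frob_inverse)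
  have "2 ^ m \<le> card {x::'a. frob m x = x}"
    by (rule card_frob_fixed_ge[OF char card assms(5)])
  with linearized_injective_if_bij[OF char period assms(3,5) A C] \<open>bij P\<close> P
  have trace_1: "monodromy_trace C D m = 1"
    by (intro monodromy_trace_eq_1[OF char AD fixed \<open>m > 0\<close>]) auto
  define t where "t = frob m x + x"
  have "frob m t = t"
    unfolding t_def using period by (simp add: frob_add[OF char] add.commute)
  have Px: "P x = b * (t + \<delta>) ^ 6 + x"
    unfolding P t_def ..
  have trace: "frob m (P x) + P x + B = A * t ^ 4 + A * C * t\<^sup>2 + t"
    using trace_sixth_power[OF char assms(3) \<open>frob m t = t\<close> A C B]
    unfolding Px t_def by (simp add: frob_add[OF char] algebra_simps char2_simps[OF char] del: frob_mult)
  show ?thesis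
    unfolding trace
    unfolding linearized_inverse_sum[OF char \<open>A \<noteq> 0\<close> D fixed(1) \<open>m > 0\<close> \<open>frob m t = t\<close>]
      trace_1 Px
    by (simp add: algebra_simps char2_simps[OF char])
qed

theorem theorem3p14:
  fixes m q :: nat and b \<delta> :: "'a::{field,finite}"
    and A B C D :: 'a and P Pinv :: "'a \<Rightarrow> 'a"
  assumes "m > 0" and "q = 2 ^ m" and "card (UNIV :: 'a set) = q ^ 2"
    and "b ^ q = b" and "b \<noteq> 0"
    and "\<delta> ^ q \<noteq> \<delta>"
    and "A = b * (tr q \<delta>) ^ 2"
    and "B = b * \<delta> ^ (6 * q) + b * \<delta> ^ 6"
    and "C = (tr q \<delta>) ^ 2"
    and "D = inverse A"
    and "P = (\<lambda>x. b * (x ^ q + x + \<delta>) ^ 6 + x)"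
    and "Pinv = (\<lambda>x. x + b * (\<delta> + (\<Sum>i<m.
            (D ^ (2 ^ i) * (S C D (int m - 2 - int i)) ^ (2 ^ (i + 1))
             + D powi (1 - 2 ^ i) * S C D (int i)) * (x ^ q + x + B) ^ (2 ^ i))) ^ 6)"
    and "bij P"
  shows "\<forall>c. P (Pinv c) = c \<and> Pinv (P c) = c"
proof -
  have q_power: "y ^ q = frob m y" for y :: 'a
    by (simp add: frob_def assms(2))
  have "Pinv (P x) = x" for x
    unfolding assms(12) q_power
  proof (rule inverse_formula_left_inverse[OF assms(1)])
    show "A = b * (\<delta> + frob m \<delta>)\<^sup>2" and "C = (\<delta> + frob m \<delta>)\<^sup>2"
      using assms(7,9) by (simp_all add: tr_def q_power)
    show "B = b * frob m \<delta> ^ 6 + b * \<delta> ^ 6"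
      unfolding assms(8) q_power[symmetric] power_mult[symmetric] by (simp add: mult.commute)
  qed (use assms q_power in simp_all)
  then show ?thesis
    using \<open>bij P\<close> by (metis bij_def surj_def)
qed

end
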